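(* Let $n \geq 2$ and $m\geq 2$ be integers, let $\mathcal{V}=\mathcal{V}_1\otimes \dots \otimes \mathcal{V}_m$ be a tensor product of vector spaces over a field $\mathbb{F}$, let $E=\{x_a: a \in[n] \}$ be a multiset of product tensors in $\mathcal{V}$, with $x_a=x_{a,1}\otimes\dots\otimes x_{a,m}$, and for each $j \in [m]$ let $d_j=\dim\operatorname{span} \{ x_{a,j}: a \in [n]\}$. If $n \leq \sum_{j=1}^m (d_j-1)+1$, then $E$ splits.
   Context: $[n]=\{1,\dots,n\}$. A product tensor is a non-zero tensor $z_1\otimes\dots\otimes z_m$, $z_j\in\mathcal{V}_j$. A multiset of non-zero vectors $\{v_1,\dots,v_n\}$ ($n\ge2$) splits if there is a sub-multiset $S$ with $1\le |S|\le n-1$ such that $\operatorname{span}\{v_1,\dots,v_n\}=\operatorname{span}(S)\oplus\operatorname{span}(S^c)$, where $S^c$ is the complementary sub-multiset. *)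

theory Defs
  imports Complex_Main "HOL-Library.Function_Algebras"
begin

text \<open>Vector spaces are modelled as spaces of functions \<open>'i \<Rightarrow> 'f\<close> over a field \<open>'f\<close>
  with pointwise operations; the scalar multiplication is \<open>fscale\<close>.\<close>

definition fscale :: "'f::field \<Rightarrow> ('i \<Rightarrow> 'f) \<Rightarrow> ('i \<Rightarrow> 'f)" where
  "fscale c v = (\<lambda>x. c * v x)"

lemma vector_space_fscale: "vector_space (fscale :: 'f::field \<Rightarrow> ('i \<Rightarrow> 'f) \<Rightarrow> ('i \<Rightarrow> 'f))"
  by unfold_locales (auto simp: fscale_def fun_eq_iff algebra_simps)

abbreviation fspan :: "('i \<Rightarrow> 'f::field) set \<Rightarrow> ('i \<Rightarrow> 'f) set" where
  "fspan \<equiv> module.span fscale"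

abbreviation fdim :: "('i \<Rightarrow> 'f::field) set \<Rightarrow> nat" where
  "fdim \<equiv> vector_space.dim fscale"

text \<open>Tensor product \<open>z 0 \<otimes> \<dots> \<otimes> z (m-1)\<close> of vectors \<open>z j :: 'i \<Rightarrow> 'f\<close>, realised as the
  function on index tuples \<open>\<kappa> :: nat \<Rightarrow> 'i\<close> given by \<open>\<Prod>j<m. z j (\<kappa> j)\<close>.\<close>

definition tensor :: "nat \<Rightarrow> (nat \<Rightarrow> 'i \<Rightarrow> 'f::field) \<Rightarrow> ((nat \<Rightarrow> 'i) \<Rightarrow> 'f)" where
  "tensor m z = (\<lambda>\<kappa>. \<Prod>j<m. z j (\<kappa> j))"

text \<open>The multiset \<open>{v 0, \<dots>, v (n-1)}\<close> splits: a sub-multiset is given by a set of indices.\<close>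

definition splits :: "nat \<Rightarrow> (nat \<Rightarrow> ('k \<Rightarrow> 'f::field)) \<Rightarrow> bool" where
  "splits n v \<longleftrightarrow> (\<exists>A \<subseteq> {..<n}. 1 \<le> card A \<and> card A \<le> n - 1 \<and>
      fspan (v ` {..<n}) = {u + w | u w. u \<in> fspan (v ` A) \<and> w \<in> fspan (v ` ({..<n} - A))} \<and>
      fspan (v ` A) \<inter> fspan (v ` ({..<n} - A)) = {0})"

end

theory Submission
  imports Defs "HOL-Library.Disjoint_Sets"
begin

text \<open>Call a family of vectors \<^emph>\<open>indecomposable\<close> if no proper nonempty subfamily spans a
  complement of the span of the remaining vectors. A multiset that does not split is
  indecomposable, and in an indecomposable family every vector lies in the span of the others,
  so \<open>dim span E \<le> n - 1\<close>.

  The heart of the proof is the bound \<open>dim Y + dim Z \<le> dim X + 1\<close> for an indecomposable family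
  of product tensors \<open>x\<^sub>a = y\<^sub>a \<otimes> z\<^sub>a\<close> (\<open>X\<close>, \<open>Y\<close>, \<open>Z\<close> the spans of the \<open>x\<^sub>a\<close>, \<open>y\<^sub>a\<close>, \<open>z\<^sub>a\<close>), by
  induction on the size of the family. Some \<open>x\<^sub>e\<close> lies in the span of the other vectors, which
  split into indecomposable blocks spanning a direct sum, and \<open>x\<^sub>e\<close> has a nonzero component in
  every block. These components add up to the rank-one tensor \<open>x\<^sub>e\<close>, and a sum
  \<open>\<Sum>\<^sub>s y\<^sub>s \<otimes> v\<^sub>s\<close> of rank at most one satisfies \<open>dim span {v\<^sub>s} + dim span {y\<^sub>s} \<le> #terms + 1\<close>;
  this ties the blocks together tightly enough for their bounds to add up to the bound for the
  whole family. Splitting off one tensor factor at a time gives \<open>\<Sum>\<^sub>j d\<^sub>j + 1 \<le> dim span E + m\<close>,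
  which contradicts \<open>dim span E \<le> n - 1\<close> and \<open>n \<le> \<Sum>\<^sub>j (d\<^sub>j - 1) + 1\<close>.\<close>

context vector_space
begin

lemma dim_le_dim_if_subset_span:
  assumes "finite W" "V \<subseteq> span W"
  shows "dim V \<le> dim W"
proof -
  obtain C where C: "C \<subseteq> W" "W \<subseteq> span C" "card C = dim W"
    using basis_exists by metis
  have "V \<subseteq> span C"
    using assms(2) span_minimal[OF C(2) subspace_span] by blast
  then show ?thesis
    using dim_le_card C assms(1) finite_subset by metis
qed

lemma dim_subset_finite: "finite T \<Longrightarrow> S \<subseteq> T \<Longrightarrow> dim S \<le> dim T"
  using dim_le_dim_if_subset_span span_superset by blast

lemma dim_singleton_nonzero: "v \<noteq> 0 \<Longrightarrow> dim {v} = 1"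
  by (simp add: dim_eq_card_independent)

lemma dim_insert_if_in_span: "u \<in> span S \<Longrightarrow> dim (insert u S) = dim S"
  by (rule span_eq_dim[OF span_redundant])

lemma in_span_if_scale_in_span: "c *s u \<in> span S \<Longrightarrow> c \<noteq> 0 \<Longrightarrow> u \<in> span S"
  using span_scale[of "c *s u" S "inverse c"] by simp

lemma dim_Un_le:
  assumes "finite S" "finite T"
  shows "dim (S \<union> T) \<le> dim S + dim T"
proof -
  obtain C where C: "C \<subseteq> S" "S \<subseteq> span C" "card C = dim S"
    using basis_exists by metis
  obtain D where D: "D \<subseteq> T" "T \<subseteq> span D" "card D = dim T"
    using basis_exists by metis
  have "S \<union> T \<subseteq> span (C \<union> D)"
    using C(2) D(2) span_mono[of C "C \<union> D"] span_mono[of D "C \<union> D"] by blast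
  then have "dim (S \<union> T) \<le> card (C \<union> D)"
    using dim_le_card C(1) D(1) assms finite_subset by (metis finite_UnI)
  also have "\<dots> \<le> card C + card D"
    by (rule card_Un_le)
  finally show ?thesis
    using C(3) D(3) by simp
qed

lemma dim_Un_ge_if_span_Int_eq_0:
  assumes "finite S" "finite T" "span S \<inter> span T = {0}"
  shows "dim S + dim T \<le> dim (S \<union> T)"
proof -
  obtain C where C: "C \<subseteq> S" "independent C" "card C = dim S"
    using basis_exists by metis
  obtain D where D: "D \<subseteq> T" "independent D" "card D = dim T"
    using basis_exists by metis
  have fin: "finite C" "finite D"
    using C(1) D(1) assms(1,2) finite_subset by auto
  have span_C: "(\<Sum>x\<in>C. f x *s x) \<in> span S" and span_D: "(\<Sum>x\<in>D. f x *s x) \<in> span T" for f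
    using C(1) D(1) by (auto intro!: span_sum span_scale intro: span_base)
  have disj: "C \<inter> D = {}"
  proof (rule ccontr)
    assume "C \<inter> D \<noteq> {}"
    then obtain u where "u \<in> C" "u \<in> D"
      by blast
    then have "u = 0"
      using C(1) D(1) assms(3) span_base by blast
    then show False
      using \<open>u \<in> C\<close> C(2) dependent_zero by blast
  qed
  have "independent (C \<union> D)"
  proof (rule independent_if_scalars_zero)
    fix f x
    assume "(\<Sum>x\<in>C \<union> D. f x *s x) = 0" and x: "x \<in> C \<union> D"
    then have CD: "(\<Sum>x\<in>C. f x *s x) = - (\<Sum>x\<in>D. f x *s x)"
      by (simp add: sum.union_disjoint[OF fin disj] eq_neg_iff_add_eq_0)
    moreover have "- (\<Sum>x\<in>D. f x *s x) \<in> span T"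
      using span_D span_neg by blast
    ultimately have "(\<Sum>x\<in>C. f x *s x) \<in> span S \<inter> span T"
      using span_C[of f] by simp
    then have "(\<Sum>x\<in>C. f x *s x) = 0" "(\<Sum>x\<in>D. f x *s x) = 0"
      unfolding assms(3) using CD by simp_all
    then show "f x = 0"
      using x independentD[OF C(2) fin(1) subset_refl] independentD[OF D(2) fin(2) subset_refl]
      by blast
  qed (use fin in simp)
  then have "card (C \<union> D) = dim (C \<union> D)"
    by (simp add: dim_eq_card_independent)
  also have "\<dots> \<le> dim (S \<union> T)"
    using dim_subset_finite[of "S \<union> T" "C \<union> D"] C(1) D(1) assms(1,2) by blast
  finally show ?thesis
    using card_Un_disjoint[OF fin disj] C(3) D(3) by simp
qed

lemma in_span_UN_imp_sum:
  assumes "finite P" "u \<in> span (\<Union>B\<in>P. S B)"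
  obtains w where "\<And>B. B \<in> P \<Longrightarrow> w B \<in> span (S B)" "u = (\<Sum>B\<in>P. w B)"
proof -
  have "\<exists>w. (\<forall>B\<in>P. w B \<in> span (S B)) \<and> u = (\<Sum>B\<in>P. w B)"
    using assms
  proof (induction P arbitrary: u rule: finite_induct)
    case empty
    then show ?case
      by simp
  next
    case (insert B P)
    then obtain a b where ab: "u = a + b" "a \<in> span (S B)" "b \<in> span (\<Union>B\<in>P. S B)"
      using span_Un[of "S B" "\<Union>B\<in>P. S B"] by auto
    obtain w where w: "\<forall>B\<in>P. w B \<in> span (S B)" "b = (\<Sum>B\<in>P. w B)"
      using insert.IH[OF ab(3)] by blast
    have "(\<Sum>B'\<in>P. (w(B := a)) B') = b"
      using w(2) insert.hyps(2) by (auto intro: sum.cong)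
    then show ?case
      using insert.hyps ab w by (intro exI[of _ "w(B := a)"]) auto
  qed
  then show ?thesis
    using that by blast
qed

lemma obtain_independent_index_set:
  fixes y :: "'c \<Rightarrow> 'b"
  obtains T where "T \<subseteq> B" "inj_on y T" "independent (y ` T)" "y ` B \<subseteq> span (y ` T)"
    "card T = dim (y ` B)"
proof -
  obtain C where C: "C \<subseteq> y ` B" "independent C" "y ` B \<subseteq> span C" "card C = dim (y ` B)"
    using basis_exists by metis
  obtain T where "T \<subseteq> B" "C = y ` T" "inj_on y T"
    using subset_image_inj C(1) by metis
  then show ?thesis
    using that C card_image by metis
qed

lemma in_span_image_imp_sum:
  assumes "finite T" "inj_on y T" "u \<in> span (y ` T)"
  obtains c where "u = (\<Sum>s\<in>T. c s *s y s)"
proof -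
  obtain f where "u = (\<Sum>v\<in>y ` T. f v *s v)"
    using assms(1,3) span_finite[of "y ` T"] by auto
  then have "u = (\<Sum>s\<in>T. f (y s) *s y s)"
    using sum.reindex[OF assms(2)] by simp
  then show ?thesis
    by (rule that)
qed

lemma obtain_coordinates:
  assumes "finite T" "inj_on y T" "y ` S \<subseteq> span (y ` T)"
  obtains c where "\<And>t. t \<in> S \<Longrightarrow> y t = (\<Sum>s\<in>T. c t s *s y s)"
proof -
  have "\<forall>t\<in>S. \<exists>c. y t = (\<Sum>s\<in>T. c s *s y s)"
  proof
    fix t
    assume "t \<in> S"
    then have "y t \<in> span (y ` T)"
      using assms(3) by blast
    then obtain c where "y t = (\<Sum>s\<in>T. c s *s y s)"
      by (rule in_span_image_imp_sum[OF assms(1,2)])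
    then show "\<exists>c. y t = (\<Sum>s\<in>T. c s *s y s)"
      by blast
  qed
  then show ?thesis
    using that by metis
qed

lemma scale_eq_0_if_independent_image:
  assumes "finite T" "inj_on y T" "independent (y ` T)" "(\<Sum>s\<in>T. c s *s y s) = 0" "s \<in> T"
  shows "c s = 0"
proof -
  have "(\<Sum>u\<in>y ` T. c (inv_into T y u) *s u) = (\<Sum>s\<in>T. c s *s y s)"
    using assms(2) by (simp add: sum.reindex)
  then have "c (inv_into T y (y s)) = 0"
    using independentD[OF assms(3) finite_imageI[OF assms(1)] subset_refl,
        of "\<lambda>u. c (inv_into T y u)"] assms(4,5)
    by simp
  then show ?thesis
    using assms(2,5) by simp
qed

lemma obtain_basis_through:
  assumes "finite Z" "r \<in> span Z" "r \<noteq> 0"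
  obtains G where "finite G" "card G + 1 = dim Z" "Z \<subseteq> span (insert r G)"
proof -
  obtain C where C: "r \<in> C" "C \<subseteq> insert r Z" "independent C" "insert r Z \<subseteq> span C"
    using maximal_independent_subset_extend[of "{r}" "insert r Z"] assms(3) by auto
  have fin: "finite C"
    using C(2) assms(1) finite_subset by blast
  have "card C = dim (insert r Z)"
    using basis_card_eq_dim[OF C(2,4,3)] .
  also have "\<dots> = dim Z"
    by (rule dim_insert_if_in_span[OF assms(2)])
  finally have "card (C - {r}) + 1 = dim Z"
    using C(1) fin card_Diff_singleton[OF C(1)] card_gt_0_iff[of C] by auto
  moreover have "Z \<subseteq> span (insert r (C - {r}))"
    using C(1,4) by (simp add: insert_absorb)
  ultimately show ?thesis
    using that fin by blast
qed

lemma dim_UN_add_card_le: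
  assumes "finite P" "\<And>B. B \<in> P \<Longrightarrow> finite (Z B)"
    and "\<And>B. B \<in> P \<Longrightarrow> r B \<in> span (Z B)" "\<And>B. B \<in> P \<Longrightarrow> r B \<noteq> 0"
  shows "dim (\<Union>B\<in>P. Z B) + card P \<le> (\<Sum>B\<in>P. dim (Z B)) + dim (r ` P)"
proof -
  have "\<forall>B\<in>P. \<exists>G. finite G \<and> card G + 1 = dim (Z B) \<and> Z B \<subseteq> span (insert (r B) G)"
  proof
    fix B
    assume "B \<in> P"
    then obtain G where "finite G" "card G + 1 = dim (Z B)" "Z B \<subseteq> span (insert (r B) G)"
      by (metis obtain_basis_through assms(2-4))
    then show "\<exists>G. finite G \<and> card G + 1 = dim (Z B) \<and> Z B \<subseteq> span (insert (r B) G)"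
      by blast
  qed
  from bchoice[OF this] obtain G where G: "\<forall>B\<in>P. finite (G B) \<and> card (G B) + 1 = dim (Z B) \<and>
      Z B \<subseteq> span (insert (r B) (G B))"
    by blast
  have fin: "finite (\<Union>B\<in>P. G B)" "finite (r ` P)"
    using G by (simp_all add: assms(1))
  have "Z B \<subseteq> span ((\<Union>B\<in>P. G B) \<union> r ` P)" if "B \<in> P" for B
  proof -
    have "insert (r B) (G B) \<subseteq> (\<Union>B\<in>P. G B) \<union> r ` P"
      using that by blast
    then show ?thesis
      using G that span_mono by (meson subset_trans)
  qed
  then have "dim (\<Union>B\<in>P. Z B) \<le> dim ((\<Union>B\<in>P. G B) \<union> r ` P)"
    using dim_le_dim_if_subset_span fin by (simp add: UN_least)
  also have "\<dots> \<le> card (\<Union>B\<in>P. G B) + dim (r ` P)"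
    using dim_Un_le[OF fin] dim_le_card'[OF fin(1)] by linarith
  also have "card (\<Union>B\<in>P. G B) \<le> (\<Sum>B\<in>P. card (G B))"
    by (rule card_UN_le[OF assms(1)])
  finally have "dim (\<Union>B\<in>P. Z B) + card P \<le> (\<Sum>B\<in>P. card (G B) + 1) + dim (r ` P)"
    by (simp only: sum.distrib) simp
  also have "(\<Sum>B\<in>P. card (G B) + 1) = (\<Sum>B\<in>P. dim (Z B))"
    using G by (intro sum.cong) auto
  finally show ?thesis .
qed

end

interpretation fv: vector_space "fscale :: 'f::field \<Rightarrow> ('i \<Rightarrow> 'f) \<Rightarrow> ('i \<Rightarrow> 'f)"
  by (rule vector_space_fscale)

definition direct_summand :: "('c \<Rightarrow> 'i \<Rightarrow> 'f::field) \<Rightarrow> 'c set \<Rightarrow> 'c set \<Rightarrow> bool" where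
  "direct_summand v B A \<longleftrightarrow> fspan (v ` B) \<inter> fspan (v ` (A - B)) = {0}"

definition indecomposable :: "('c \<Rightarrow> 'i \<Rightarrow> 'f::field) \<Rightarrow> 'c set \<Rightarrow> bool" where
  "indecomposable v A \<longleftrightarrow> (\<forall>B \<subseteq> A. B \<noteq> {} \<longrightarrow> B \<noteq> A \<longrightarrow> \<not> direct_summand v B A)"

definition indecomposable_decomposition ::
    "('c \<Rightarrow> 'i \<Rightarrow> 'f::field) \<Rightarrow> 'c set \<Rightarrow> 'c set set \<Rightarrow> bool" where
  "indecomposable_decomposition v A P \<longleftrightarrow>
    partition_on A P \<and> (\<forall>B\<in>P. indecomposable v B \<and> direct_summand v B A)"

lemma direct_summand_Diff: "B \<subseteq> A \<Longrightarrow> direct_summand v (A - B) A \<longleftrightarrow> direct_summand v B A"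
  by (auto simp: direct_summand_def Diff_Diff_Int Int_absorb1)

lemma direct_summand_trans:
  assumes "B \<subseteq> S" "S \<subseteq> A" "direct_summand v B S" "direct_summand v S A"
  shows "direct_summand v B A"
  unfolding direct_summand_def
proof (intro equalityI subsetI)
  fix u
  assume u: "u \<in> fspan (v ` B) \<inter> fspan (v ` (A - B))"
  have "v ` (A - B) = v ` (S - B) \<union> v ` (A - S)"
    using assms(1,2) by blast
  then have "u \<in> fspan (v ` (S - B) \<union> v ` (A - S))"
    using u by simp
  then obtain s t where st: "u = s + t" "s \<in> fspan (v ` (S - B))" "t \<in> fspan (v ` (A - S))"
    unfolding fv.span_Un by blast
  have "fspan (v ` B) \<subseteq> fspan (v ` S)" "fspan (v ` (S - B)) \<subseteq> fspan (v ` S)"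
    using assms(1) by (simp_all add: fv.span_mono image_mono)
  moreover have "t = u - s"
    using st(1) by simp
  ultimately have "t \<in> fspan (v ` S)"
    using u st(2) by (auto intro: fv.span_diff)
  then have "t = 0"
    using assms(4) st(3) unfolding direct_summand_def by blast
  then show "u \<in> {0}"
    using assms(3) u st unfolding direct_summand_def by auto
qed (simp add: fv.span_zero)

lemma direct_summand_insert:
  assumes "direct_summand v B A" "v e \<in> fspan (v ` (A - B))" "e \<notin> B"
  shows "direct_summand v B (insert e A)"
proof -
  have "v ` (insert e A - B) = insert (v e) (v ` (A - B))"
    using assms(3) by blast
  then show ?thesis
    using assms(1) fv.span_redundant[OF assms(2)] unfolding direct_summand_def by simp
qed

lemma indecomposable_in_span_Diff:
  assumes "indecomposable v A" "e \<in> A" "A \<noteq> {e}"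
  shows "v e \<in> fspan (v ` (A - {e}))"
proof -
  have "\<not> direct_summand v {e} A"
    using assms unfolding indecomposable_def by blast
  then obtain u where u: "u \<in> fspan {v e}" "u \<in> fspan (v ` (A - {e}))" "u \<noteq> 0"
    unfolding direct_summand_def using fv.span_zero by auto
  then obtain c where c: "u = fscale c (v e)"
    using fv.span_singleton by blast
  then have "c \<noteq> 0"
    using u(3) by auto
  then show ?thesis
    using fv.in_span_if_scale_in_span u(2) c by blast
qed

lemma dim_lt_card_if_indecomposable:
  assumes "finite A" "2 \<le> card A" "indecomposable v A"
  shows "fdim (v ` A) < card A"
proof -
  obtain e where e: "e \<in> A"
    using assms(2) by (metis all_not_in_conv card.empty not_numeral_le_zero)
  moreover have "A \<noteq> {e}"
    using assms(2) by (intro notI) simp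
  ultimately have in_span: "v e \<in> fspan (v ` (A - {e}))"
    by (rule indecomposable_in_span_Diff[OF assms(3)])
  have "v ` A = insert (v e) (v ` (A - {e}))"
    using e by blast
  then have "fdim (v ` A) = fdim (v ` (A - {e}))"
    using fv.dim_insert_if_in_span[OF in_span] by simp
  also have "\<dots> \<le> card (v ` (A - {e}))"
    by (rule fv.dim_le_card') (simp add: assms(1))
  also have "\<dots> \<le> card (A - {e})"
    by (rule card_image_le) (simp add: assms(1))
  also have "\<dots> < card A"
    using assms(1) e by (rule card_Diff1_less)
  finally show ?thesis .
qed

lemma partition_on_subset: "partition_on A P \<Longrightarrow> B \<in> P \<Longrightarrow> B \<subseteq> A"
  by (auto simp: partition_on_def)

lemma partition_on_Un:
  assumes "partition_on S P" "partition_on T Q" "S \<inter> T = {}"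
  shows "partition_on (S \<union> T) (P \<union> Q)"
proof -
  have "disjoint (P \<union> Q)"
    using assms disjoint_union[of P Q] by (simp add: partition_on_def)
  then show ?thesis
    using assms by (simp add: partition_on_def)
qed

lemma indecomposable_decomposition_Un:
  assumes "S \<subseteq> A" "direct_summand v S A"
    and "indecomposable_decomposition v S P" "indecomposable_decomposition v (A - S) Q"
  shows "indecomposable_decomposition v A (P \<union> Q)"
proof -
  have "partition_on A (P \<union> Q)"
    using partition_on_Un[of S P "A - S" Q] assms(1,3,4)
    by (simp add: indecomposable_decomposition_def Un_absorb1)
  moreover have "indecomposable v B \<and> direct_summand v B A" if "B \<in> P \<union> Q" for B
    using that
  proof
    assume B: "B \<in> P"
    then have "B \<subseteq> S" "indecomposable v B" "direct_summand v B S"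
      using assms(3) partition_on_subset unfolding indecomposable_decomposition_def by blast+
    then show ?thesis
      using direct_summand_trans[OF _ assms(1) _ assms(2)] by blast
  next
    assume B: "B \<in> Q"
    then have "B \<subseteq> A - S" "indecomposable v B" "direct_summand v B (A - S)"
      using assms(4) partition_on_subset unfolding indecomposable_decomposition_def by blast+
    moreover have "direct_summand v (A - S) A"
      using direct_summand_Diff[OF assms(1)] assms(2) by blast
    ultimately show ?thesis
      using direct_summand_trans[OF _ Diff_subset] by blast
  qed
  ultimately show ?thesis
    unfolding indecomposable_decomposition_def by blast
qed

lemma exists_indecomposable_decomposition:
  "finite A \<Longrightarrow> \<exists>P. indecomposable_decomposition v A P"
proof (induction "card A" arbitrary: A rule: less_induct)
  case less
  consider "A = {}" | "A \<noteq> {}" "indecomposable v A"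
    | S where "S \<subseteq> A" "S \<noteq> {}" "S \<noteq> A" "direct_summand v S A"
    unfolding indecomposable_def by blast
  then show ?case
  proof cases
    case 1
    then show ?thesis
      by (intro exI[of _ "{}"]) (simp add: indecomposable_decomposition_def partition_on_empty)
  next
    case 2
    have "direct_summand v A A"
      by (simp add: direct_summand_def fv.span_zero)
    then show ?thesis
      using 2 partition_on_space[of A] unfolding indecomposable_decomposition_def by blast
  next
    case 3
    have fin: "finite S" "finite (A - S)"
      using 3(1) less.prems finite_subset by auto
    have "card S < card A"
      using 3(1,3) by (intro psubset_card_mono[OF less.prems]) blast
    then obtain P where P: "indecomposable_decomposition v S P"
      using less.hyps[OF _ fin(1)] by blast
    have "card (A - S) < card A"
      using 3(1,2) by (intro psubset_card_mono[OF less.prems]) blast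
    then obtain Q where Q: "indecomposable_decomposition v (A - S) Q"
      using less.hyps[OF _ fin(2)] by blast
    show ?thesis
      using indecomposable_decomposition_Un[OF 3(1,4) P Q] by blast
  qed
qed

lemma sum_dim_le_dim_if_indecomposable_decomposition:
  assumes "finite A" "indecomposable_decomposition v A P"
  shows "(\<Sum>B\<in>P. fdim (v ` B)) \<le> fdim (v ` A)"
proof -
  have part: "partition_on A P" and direct: "\<And>B. B \<in> P \<Longrightarrow> direct_summand v B A"
    using assms(2) unfolding indecomposable_decomposition_def by blast+
  have "(\<Sum>B\<in>P'. fdim (v ` B)) \<le> fdim (v ` \<Union>P')" if "P' \<subseteq> P" for P'
    using finite_subset[OF that finite_elements[OF assms(1) part]] that
  proof (induction P' rule: finite_induct)
    case empty
    then show ?case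
      by simp
  next
    case (insert B P')
    have B: "B \<in> P" "B \<subseteq> A"
      using insert.prems partition_on_subset[OF part] by blast+
    have "B' \<subseteq> A - B" if "B' \<in> P'" for B'
    proof -
      have "B' \<in> P" "B' \<noteq> B"
        using that insert.prems insert.hyps(2) by blast+
      then show ?thesis
        using partition_on_subset[OF part] disjointD[OF partition_onD2[OF part] _ B(1)] by blast
    qed
    then have "fspan (v ` \<Union>P') \<subseteq> fspan (v ` (A - B))"
      by (intro fv.span_mono image_mono) blast
    then have "fspan (v ` B) \<inter> fspan (v ` \<Union>P') \<subseteq> {0}"
      using direct[OF B(1)] unfolding direct_summand_def by blast
    then have disj: "fspan (v ` B) \<inter> fspan (v ` \<Union>P') = {0}"
      using fv.span_zero by blast
    have "\<Union>P' \<subseteq> A"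
      using \<open>\<And>B'. B' \<in> P' \<Longrightarrow> B' \<subseteq> A - B\<close> by blast
    then have "finite (v ` B)" "finite (v ` \<Union>P')"
      using finite_subset[OF B(2) assms(1)] finite_subset[OF _ assms(1)] by simp_all
    then have "fdim (v ` B) + fdim (v ` \<Union>P') \<le> fdim (v ` \<Union>(insert B P'))"
      using fv.dim_Un_ge_if_span_Int_eq_0 disj by (simp add: image_Un)
    then show ?case
      using insert by simp
  qed
  then show ?thesis
    using partition_onD1[OF part] by blast
qed

lemma indecomposable_insert_parts_nonzero:
  assumes "indecomposable v (insert e A)" "e \<notin> A" "finite P" "partition_on A P"
    and "\<And>B. B \<in> P \<Longrightarrow> direct_summand v B A" "\<And>B. B \<in> P \<Longrightarrow> w B \<in> fspan (v ` B)"
    and "v e = (\<Sum>B\<in>P. w B)" "B \<in> P"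
  shows "w B \<noteq> 0"
proof
  assume "w B = 0"
  then have "v e = (\<Sum>B'\<in>P - {B}. w B')"
    using sum.remove[OF assms(3,8), of w] assms(7) by simp
  also have "\<dots> \<in> fspan (v ` (A - B))"
  proof (rule fv.span_sum)
    fix B'
    assume B': "B' \<in> P - {B}"
    then have "B' \<subseteq> A" "B' \<inter> B = {}"
      using partition_on_subset[OF assms(4)] disjointD[OF partition_onD2[OF assms(4)]] assms(8)
      by auto
    then have "fspan (v ` B') \<subseteq> fspan (v ` (A - B))"
      by (intro fv.span_mono image_mono) blast
    then show "w B' \<in> fspan (v ` (A - B))"
      using assms(6) B' by blast
  qed
  finally have "v e \<in> fspan (v ` (A - B))" .
  moreover have "B \<subseteq> A" "B \<noteq> {}"
    using partition_on_subset[OF assms(4) assms(8)] partition_onD3[OF assms(4)] assms(8) by auto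
  ultimately have "direct_summand v B (insert e A)"
    using direct_summand_insert[OF assms(5)[OF assms(8)]] assms(2) by blast
  moreover have "B \<subseteq> insert e A" "B \<noteq> insert e A"
    using \<open>B \<subseteq> A\<close> assms(2) by auto
  ultimately show False
    using assms(1) \<open>B \<noteq> {}\<close> unfolding indecomposable_def by blast
qed

lemma obtain_components_of_removed_vector:
  assumes "finite A" "e \<notin> A" "indecomposable v (insert e A)" "v e \<in> fspan (v ` A)"
  obtains P w where "indecomposable_decomposition v A P" "finite P"
    "\<forall>B\<in>P. w B \<in> fspan (v ` B) \<and> w B \<noteq> 0" "v e = (\<Sum>B\<in>P. w B)"
proof -
  obtain P where P: "indecomposable_decomposition v A P"
    using exists_indecomposable_decomposition[OF assms(1)] by blast
  then have part: "partition_on A P" and direct: "\<And>B. B \<in> P \<Longrightarrow> direct_summand v B A"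
    unfolding indecomposable_decomposition_def by blast+
  have finP: "finite P"
    by (rule finite_elements[OF assms(1) part])
  have "v ` A = (\<Union>B\<in>P. v ` B)"
    using partition_onD1[OF part] by blast
  then have "v e \<in> fspan (\<Union>B\<in>P. v ` B)"
    using assms(4) by simp
  then obtain w where w: "\<And>B. B \<in> P \<Longrightarrow> w B \<in> fspan (v ` B)" "v e = (\<Sum>B\<in>P. w B)"
    using fv.in_span_UN_imp_sum[OF finP] by blast
  have "w B \<noteq> 0" if "B \<in> P" for B
    by (rule indecomposable_insert_parts_nonzero[OF assms(3,2) finP part direct w that])
  then show ?thesis
    using that P finP w by blast
qed

lemma sum_apply: "(\<Sum>a\<in>S. f a) x = (\<Sum>a\<in>S. f a x)"
  by (induction S rule: infinite_finite_induct) auto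

text \<open>Identifying an index tuple \<open>\<kappa>\<close> with the pair \<open>(\<kappa> 0, \<lambda>j. \<kappa> (Suc j))\<close>, \<open>tensor_cons y z\<close> is
  \<open>y \<otimes> z\<close>; this is how \<open>tensor (Suc m)\<close> splits off its first factor.\<close>

definition tensor_cons :: "('i \<Rightarrow> 'f::field) \<Rightarrow> ((nat \<Rightarrow> 'i) \<Rightarrow> 'f) \<Rightarrow> ((nat \<Rightarrow> 'i) \<Rightarrow> 'f)" where
  "tensor_cons y z = (\<lambda>\<kappa>. y (\<kappa> 0) * z (\<lambda>j. \<kappa> (Suc j)))"

lemma tensor_cons_case_nat [simp]: "tensor_cons y z (case_nat p q) = y p * z q"
  by (simp add: tensor_cons_def)

lemma tensor_Suc: "tensor (Suc m) z = tensor_cons (z 0) (tensor m (\<lambda>j. z (Suc j)))"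
  unfolding tensor_def tensor_cons_def by (rule ext) (rule prod.lessThan_Suc_shift)

lemma fun_eq_iff_case_nat:
  fixes w w' :: "(nat \<Rightarrow> 'i) \<Rightarrow> 'a"
  shows "w = w' \<longleftrightarrow> (\<forall>p q. w (case_nat p q) = w' (case_nat p q))"
proof (intro iffI ext)
  fix \<kappa> :: "nat \<Rightarrow> 'i"
  assume eq: "\<forall>p q. w (case_nat p q) = w' (case_nat p q)"
  have "\<kappa> = case_nat (\<kappa> 0) (\<lambda>j. \<kappa> (Suc j))"
    by (rule ext) (simp split: nat.split)
  then show "w \<kappa> = w' \<kappa>"
    using eq by metis
qed simp

lemma tensor_cons_eq_0_iff: "tensor_cons y z = 0 \<longleftrightarrow> y = 0 \<or> z = 0"
proof
  assume tc: "tensor_cons y z = 0"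
  show "y = 0 \<or> z = 0"
  proof (rule ccontr)
    assume "\<not> (y = 0 \<or> z = 0)"
    then obtain p q where "y p \<noteq> 0" "z q \<noteq> 0"
      by (auto simp: fun_eq_iff)
    then have "tensor_cons y z (case_nat p q) \<noteq> 0"
      by simp
    then show False
      using tc by simp
  qed
qed (auto simp: tensor_cons_def fun_eq_iff)

lemma tensor_cons_scale_left: "tensor_cons (fscale c y) z = fscale c (tensor_cons y z)"
  and tensor_cons_scale_right: "tensor_cons y (fscale c z) = fscale c (tensor_cons y z)"
  and tensor_cons_add_right: "tensor_cons y (z + z') = tensor_cons y z + tensor_cons y z'"
  and tensor_cons_diff_right: "tensor_cons y (z - z') = tensor_cons y z - tensor_cons y z'"
  and tensor_cons_sum_left: "tensor_cons (\<Sum>a\<in>S. g a) z = (\<Sum>a\<in>S. tensor_cons (g a) z)"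
  and tensor_cons_sum_right: "tensor_cons y (\<Sum>a\<in>S. h a) = (\<Sum>a\<in>S. tensor_cons y (h a))"
  by (simp_all add: fun_eq_iff tensor_cons_def fscale_def sum_apply algebra_simps
      sum_distrib_left sum_distrib_right)

definition slice_first :: "'i \<Rightarrow> ((nat \<Rightarrow> 'i) \<Rightarrow> 'f) \<Rightarrow> ((nat \<Rightarrow> 'i) \<Rightarrow> 'f)" where
  "slice_first p w = (\<lambda>q. w (case_nat p q))"

definition slice_rest :: "(nat \<Rightarrow> 'i) \<Rightarrow> ((nat \<Rightarrow> 'i) \<Rightarrow> 'f) \<Rightarrow> ('i \<Rightarrow> 'f)" where
  "slice_rest q w = (\<lambda>p. w (case_nat p q))"

lemma slice_first_tensor_cons: "slice_first p (tensor_cons y z) = fscale (y p) z"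
  by (simp add: slice_first_def fscale_def)

lemma slice_rest_tensor_cons: "slice_rest q (tensor_cons y z) = fscale (z q) y"
  by (simp add: slice_rest_def fscale_def mult.commute)

lemma module_fscale: "module (fscale :: 'f::field \<Rightarrow> ('i \<Rightarrow> 'f) \<Rightarrow> ('i \<Rightarrow> 'f))"
  using vector_space_fscale module_iff_vector_space by blast

lemma module_hom_slice_first:
    "module_hom fscale fscale (slice_first p :: ((nat \<Rightarrow> 'i) \<Rightarrow> 'f::field) \<Rightarrow> _)"
  and module_hom_slice_rest:
    "module_hom fscale fscale (slice_rest q :: ((nat \<Rightarrow> 'i) \<Rightarrow> 'f::field) \<Rightarrow> _)"
  by (simp_all add: module_hom_iff module_fscale slice_first_def slice_rest_def fscale_def
      fun_eq_iff algebra_simps)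

lemma module_hom_in_span:
  fixes f :: "('i \<Rightarrow> 'f::field) \<Rightarrow> ('k \<Rightarrow> 'f)"
  assumes "module_hom fscale fscale f" "w \<in> fspan S" "f ` S \<subseteq> fspan T"
  shows "f w \<in> fspan T"
proof -
  have "f w \<in> fspan (f ` S)"
    using module_hom.span_image[OF assms(1)] assms(2) by blast
  then show ?thesis
    using fv.span_minimal[OF assms(3) fv.subspace_span] by blast
qed

lemma slice_first_in_span:
  assumes "w \<in> fspan ((\<lambda>a. tensor_cons (y a) (z a)) ` S)"
  shows "slice_first p w \<in> fspan (z ` S)"
proof (rule module_hom_in_span[OF module_hom_slice_first assms])
  show "slice_first p ` (\<lambda>a. tensor_cons (y a) (z a)) ` S \<subseteq> fspan (z ` S)"
    by (auto simp: slice_first_tensor_cons intro!: fv.span_scale[OF fv.span_base])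
qed

lemma slice_rest_in_span:
  assumes "w \<in> fspan ((\<lambda>a. tensor_cons (y a) (z a)) ` S)"
  shows "slice_rest q w \<in> fspan (y ` S)"
proof (rule module_hom_in_span[OF module_hom_slice_rest assms])
  show "slice_rest q ` (\<lambda>a. tensor_cons (y a) (z a)) ` S \<subseteq> fspan (y ` S)"
    by (auto simp: slice_rest_tensor_cons intro!: fv.span_scale[OF fv.span_base])
qed

lemma tensor_cons_in_span_left:
  assumes "tensor_cons y' z' \<in> fspan ((\<lambda>a. tensor_cons (y a) (z a)) ` S)" "z' \<noteq> 0"
  shows "y' \<in> fspan (y ` S)"
proof -
  obtain q where "z' q \<noteq> 0"
    using assms(2) by (auto simp: fun_eq_iff)
  then show ?thesis
    using slice_rest_in_span[OF assms(1), of q] fv.in_span_if_scale_in_span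
    by (simp add: slice_rest_tensor_cons)
qed

lemma tensor_cons_in_span_right:
  assumes "tensor_cons y' z' \<in> fspan ((\<lambda>a. tensor_cons (y a) (z a)) ` S)" "y' \<noteq> 0"
  shows "z' \<in> fspan (z ` S)"
proof -
  obtain p where "y' p \<noteq> 0"
    using assms(2) by (auto simp: fun_eq_iff)
  then show ?thesis
    using slice_first_in_span[OF assms(1), of p] fv.in_span_if_scale_in_span
    by (simp add: slice_first_tensor_cons)
qed

lemma direct_summand_tensor_cons:
  assumes "direct_summand z B A"
  shows "direct_summand (\<lambda>a. tensor_cons (y a) (z a)) B A"
  unfolding direct_summand_def
proof (intro equalityI subsetI)
  fix w
  assume w: "w \<in> fspan ((\<lambda>a. tensor_cons (y a) (z a)) ` B) \<inter>
    fspan ((\<lambda>a. tensor_cons (y a) (z a)) ` (A - B))"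
  have "slice_first p w \<in> fspan (z ` B) \<inter> fspan (z ` (A - B))" for p
    using w slice_first_in_span[of w y z] by blast
  then have "slice_first p w = 0" for p
    using assms unfolding direct_summand_def by blast
  then have "w (case_nat p q) = 0" for p q
    unfolding slice_first_def by (metis zero_fun_apply)
  then have "w = 0"
    by (simp add: fun_eq_iff_case_nat)
  then show "w \<in> {0}"
    by simp
qed (simp add: fv.span_zero)

lemma indecomposable_tensor_cons_right:
  "indecomposable (\<lambda>a. tensor_cons (y a) (z a)) A \<Longrightarrow> indecomposable z A"
  unfolding indecomposable_def using direct_summand_tensor_cons by blast

lemma tensor_cons_sum_eq_0D:
  assumes "finite T" "inj_on y T" "fv.independent (y ` T)"
    and "(\<Sum>s\<in>T. tensor_cons (y s) (g s)) = 0" "s \<in> T"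
  shows "g s = 0"
proof (rule ext)
  fix q
  have "(\<Sum>s\<in>T. fscale (g s q) (y s)) = slice_rest q (\<Sum>s\<in>T. tensor_cons (y s) (g s))"
    by (simp add: fun_eq_iff sum_apply slice_rest_def fscale_def mult.commute)
  also have "\<dots> = 0"
    by (simp add: assms(4) slice_rest_def fun_eq_iff)
  finally show "g s q = 0 q"
    using fv.scale_eq_0_if_independent_image[OF assms(1-3) _ assms(5)] by simp
qed

lemma tensor_cons_expand_left:
  assumes "finite T" "inj_on y T" "y' \<in> fspan (y ` T)"
  obtains c where "tensor_cons y' z = (\<Sum>s\<in>T. tensor_cons (y s) (fscale (c s) z))"
proof -
  obtain c where "y' = (\<Sum>s\<in>T. fscale (c s) (y s))"
    using assms(3) by (rule fv.in_span_image_imp_sum[OF assms(1,2)])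
  then have "tensor_cons y' z = (\<Sum>s\<in>T. tensor_cons (y s) (fscale (c s) z))"
    by (simp add: tensor_cons_sum_left tensor_cons_scale_left tensor_cons_scale_right)
  then show ?thesis
    by (rule that)
qed

lemma sum_tensor_cons_regroup:
  assumes "\<And>t. t \<in> T \<Longrightarrow> y t = (\<Sum>s\<in>S. fscale (\<mu> t s) (y' s))"
  shows "(\<Sum>t\<in>T. tensor_cons (y t) (v t)) = (\<Sum>s\<in>S. tensor_cons (y' s) (\<Sum>t\<in>T. fscale (\<mu> t s) (v t)))"
proof -
  have "(\<Sum>t\<in>T. tensor_cons (y t) (v t)) = (\<Sum>t\<in>T. \<Sum>s\<in>S. tensor_cons (y' s) (fscale (\<mu> t s) (v t)))"
    using assms by (intro sum.cong refl)
      (simp add: tensor_cons_sum_left tensor_cons_scale_left tensor_cons_scale_right)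
  also have "\<dots> = (\<Sum>s\<in>S. tensor_cons (y' s) (\<Sum>t\<in>T. fscale (\<mu> t s) (v t)))"
    by (subst sum.swap) (simp add: tensor_cons_sum_right)
  finally show ?thesis .
qed

lemma subspace_sums_tensor_cons:
  "fv.subspace {\<Sum>s\<in>T. tensor_cons (y s) (v s) | v. \<forall>s. v s \<in> fspan Z}"
  (is "fv.subspace ?M")
proof (rule fv.subspaceI)
  have memI: "(\<Sum>s\<in>T. tensor_cons (y s) (v s)) \<in> ?M" if "\<forall>s. v s \<in> fspan Z" for v
    using that by blast
  show "0 \<in> ?M"
    using memI[of "\<lambda>_. 0"] by (simp add: tensor_cons_eq_0_iff sum.neutral fv.span_zero)
  fix u u' c
  assume "u \<in> ?M" "u' \<in> ?M"
  then obtain v v' where v: "u = (\<Sum>s\<in>T. tensor_cons (y s) (v s))" "\<forall>s. v s \<in> fspan Z"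
    and v': "u' = (\<Sum>s\<in>T. tensor_cons (y s) (v' s))" "\<forall>s. v' s \<in> fspan Z"
    by blast
  have "u + u' = (\<Sum>s\<in>T. tensor_cons (y s) (v s + v' s))" "\<forall>s. v s + v' s \<in> fspan Z"
    using v v' by (simp_all add: tensor_cons_add_right sum.distrib fv.span_add)
  then show "u + u' \<in> ?M"
    using memI by simp
  have "fscale c u = (\<Sum>s\<in>T. tensor_cons (y s) (fscale c (v s)))" "\<forall>s. fscale c (v s) \<in> fspan Z"
    using v by (simp_all add: tensor_cons_scale_right fv.scale_sum_right fv.span_scale)
  then show "fscale c u \<in> ?M"
    using memI by simp
qed

lemma span_tensor_cons_expand:
  assumes "finite T" "inj_on y T" "y ` B \<subseteq> fspan (y ` T)"
    and "w \<in> fspan ((\<lambda>a. tensor_cons (y a) (z a)) ` B)"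
  obtains v where "w = (\<Sum>s\<in>T. tensor_cons (y s) (v s))" "\<forall>s. v s \<in> fspan (z ` B)"
proof -
  let ?M = "{\<Sum>s\<in>T. tensor_cons (y s) (v s) | v. \<forall>s. v s \<in> fspan (z ` B)}"
  have "tensor_cons (y a) (z a) \<in> ?M" if "a \<in> B" for a
  proof -
    have "y a \<in> fspan (y ` T)"
      using assms(3) that by blast
    then obtain c where "tensor_cons (y a) (z a) = (\<Sum>s\<in>T. tensor_cons (y s) (fscale (c s) (z a)))"
      by (rule tensor_cons_expand_left[OF assms(1,2)])
    moreover have "\<forall>s. fscale (c s) (z a) \<in> fspan (z ` B)"
      using that by (simp add: fv.span_scale fv.span_base)
    ultimately show ?thesis
      by (intro CollectI exI[of _ "\<lambda>s. fscale (c s) (z a)"] conjI)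
  qed
  then have "fspan ((\<lambda>a. tensor_cons (y a) (z a)) ` B) \<subseteq> ?M"
    by (intro fv.span_minimal subspace_sums_tensor_cons) auto
  then show ?thesis
    using assms(4) that by blast
qed

lemma rank_one_sum_expand:
  assumes "finite T" "(\<Sum>s\<in>T. tensor_cons (y s) (v s)) = tensor_cons y' z'"
    and "finite T0" "inj_on y T0" "y ` T \<subseteq> fspan (y ` T0)"
  obtains \<eta> where "tensor_cons y' z' = (\<Sum>s\<in>T0. tensor_cons (y s) (fscale (\<eta> s) z'))"
proof (cases "z' = 0")
  case True
  then show ?thesis
    using that[of "\<lambda>_. 0"] by (simp add: tensor_cons_eq_0_iff sum.neutral)
next
  case False
  have "tensor_cons y' z' \<in> fspan ((\<lambda>s. tensor_cons (y s) (v s)) ` T)"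
    unfolding assms(2)[symmetric] by (intro fv.span_sum fv.span_base) simp
  then have "y' \<in> fspan (y ` T0)"
    using tensor_cons_in_span_left[OF _ False] fv.span_minimal[OF assms(5) fv.subspace_span]
    by blast
  then obtain c where "tensor_cons y' z' = (\<Sum>s\<in>T0. tensor_cons (y s) (fscale (c s) z'))"
    by (rule tensor_cons_expand_left[OF assms(3,4)])
  then show ?thesis
    by (rule that)
qed

text \<open>Expanding the \<open>y\<^sub>t\<close>, \<open>t \<notin> T0\<close>, and \<open>y'\<close> over the basis \<open>y\<^sub>s\<close>, \<open>s \<in> T0\<close>, and comparing
  coefficients of the independent \<open>y\<^sub>s\<close> expresses each \<open>v\<^sub>s\<close>, \<open>s \<in> T0\<close>, through \<open>z'\<close> and the
  remaining \<open>v\<^sub>t\<close>.\<close>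

lemma rank_one_sum_in_span:
  fixes y :: "'s \<Rightarrow> 'i \<Rightarrow> 'f::field" and v :: "'s \<Rightarrow> (nat \<Rightarrow> 'i) \<Rightarrow> 'f"
  assumes "finite T" "(\<Sum>s\<in>T. tensor_cons (y s) (v s)) = tensor_cons y' z'"
    and "T0 \<subseteq> T" "inj_on y T0" "fv.independent (y ` T0)" "y ` T \<subseteq> fspan (y ` T0)"
  shows "v ` T \<subseteq> fspan (insert z' (v ` (T - T0)))"
proof -
  have fin: "finite T0"
    using assms(1,3) finite_subset by blast
  obtain \<mu> where \<mu>: "\<And>t. t \<in> T - T0 \<Longrightarrow> y t = (\<Sum>s\<in>T0. fscale (\<mu> t s) (y s))"
    using fv.obtain_coordinates[OF fin assms(4), of "T - T0"] assms(6) by blast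
  obtain \<eta> where \<eta>: "tensor_cons y' z' = (\<Sum>s\<in>T0. tensor_cons (y s) (fscale (\<eta> s) z'))"
    by (rule rank_one_sum_expand[OF assms(1,2) fin assms(4,6)])
  define u where "u s = v s + (\<Sum>t\<in>T - T0. fscale (\<mu> t s) (v t)) - fscale (\<eta> s) z'" for s
  have regroup: "(\<Sum>t\<in>T - T0. tensor_cons (y t) (v t)) =
      (\<Sum>s\<in>T0. tensor_cons (y s) (\<Sum>t\<in>T - T0. fscale (\<mu> t s) (v t)))"
    using \<mu> by (rule sum_tensor_cons_regroup)
  have "(\<Sum>s\<in>T0. tensor_cons (y s) (u s)) =
      (\<Sum>s\<in>T0. tensor_cons (y s) (v s)) + (\<Sum>t\<in>T - T0. tensor_cons (y t) (v t)) - tensor_cons y' z'"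
    unfolding u_def \<eta> regroup
    by (simp add: tensor_cons_add_right tensor_cons_diff_right sum.distrib sum_subtractf)
  also have "\<dots> = 0"
    using sum.subset_diff[OF assms(3,1), of "\<lambda>s. tensor_cons (y s) (v s)"] assms(2)
    by (simp add: add.commute)
  finally have u0: "u s = 0" if "s \<in> T0" for s
    using tensor_cons_sum_eq_0D[OF fin assms(4,5) _ that] by blast
  have "v s \<in> fspan (insert z' (v ` (T - T0)))" if "s \<in> T0" for s
  proof -
    have "v s = fscale (\<eta> s) z' - (\<Sum>t\<in>T - T0. fscale (\<mu> t s) (v t))"
      using u0[OF that] unfolding u_def by (simp add: algebra_simps)
    moreover have "fscale (\<eta> s) z' \<in> fspan (insert z' (v ` (T - T0)))"
      "(\<Sum>t\<in>T - T0. fscale (\<mu> t s) (v t)) \<in> fspan (insert z' (v ` (T - T0)))"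
      by (auto intro!: fv.span_sum fv.span_scale[OF fv.span_base])
    ultimately show ?thesis
      by (simp add: fv.span_diff)
  qed
  moreover have "v t \<in> fspan (insert z' (v ` (T - T0)))" if "t \<in> T - T0" for t
    using that by (simp add: fv.span_base)
  ultimately show ?thesis
    by blast
qed

lemma dim_factors_of_rank_one_sum:
  fixes y :: "'s \<Rightarrow> 'i \<Rightarrow> 'f::field" and v :: "'s \<Rightarrow> (nat \<Rightarrow> 'i) \<Rightarrow> 'f"
  assumes "finite T" "(\<Sum>s\<in>T. tensor_cons (y s) (v s)) = tensor_cons y' z'"
  shows "fdim (v ` T) + fdim (y ` T) \<le> card T + 1"
proof -
  obtain T0 where T0: "T0 \<subseteq> T" "inj_on y T0" "fv.independent (y ` T0)" "y ` T \<subseteq> fspan (y ` T0)"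
    "card T0 = fdim (y ` T)"
    by (rule fv.obtain_independent_index_set)
  have "fdim (v ` T) \<le> card (insert z' (v ` (T - T0)))"
    using fv.dim_le_card[OF rank_one_sum_in_span[OF assms T0(1-4)]] assms(1) by simp
  also have "\<dots> \<le> card (v ` (T - T0)) + 1"
    using assms(1) by (simp add: card_insert_if)
  also have "\<dots> \<le> card (T - T0) + 1"
    using card_image_le[of "T - T0" v] assms(1) by simp
  also have "card (T - T0) = card T - card T0"
    using card_Diff_subset[OF finite_subset[OF T0(1) assms(1)] T0(1)] .
  finally show ?thesis
    using card_mono[OF assms(1) T0(1)] T0(5) by linarith
qed

text \<open>The double sum is a single rank-one sum indexed by the pairs \<open>(B, s)\<close>; the nonzero vectors
  \<open>V B (r B)\<close> save one \<open>z\<close>-dimension per block.\<close>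

lemma dim_factors_of_rank_one_double_sum:
  fixes y :: "'a \<Rightarrow> 'i \<Rightarrow> 'f::field" and z :: "'a \<Rightarrow> (nat \<Rightarrow> 'i) \<Rightarrow> 'f"
  assumes "finite P" "\<And>B. B \<in> P \<Longrightarrow> finite B"
    and "\<And>B. B \<in> P \<Longrightarrow> finite (T B) \<and> y ` B \<subseteq> fspan (y ` T B) \<and> card (T B) = fdim (y ` B)"
    and "\<And>B s. B \<in> P \<Longrightarrow> V B s \<in> fspan (z ` B)"
    and "\<And>B. B \<in> P \<Longrightarrow> r B \<in> T B \<and> V B (r B) \<noteq> 0"
    and "(\<Sum>B\<in>P. \<Sum>s\<in>T B. tensor_cons (y s) (V B s)) = tensor_cons y' z'"
  shows "fdim (y ` \<Union>P) + fdim (z ` \<Union>P) + card P \<le> (\<Sum>B\<in>P. fdim (y ` B) + fdim (z ` B)) + 1"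
proof -
  define S where "S = (SIGMA B:P. T B)"
  define Y where "Y p = y (snd p)" for p :: "'a set \<times> 'a"
  define Z where "Z p = V (fst p) (snd p)" for p
  have finS: "finite S"
    unfolding S_def using assms(1,3) by blast
  have "(\<Sum>p\<in>S. tensor_cons (Y p) (Z p)) = (\<Sum>B\<in>P. \<Sum>s\<in>T B. tensor_cons (y s) (V B s))"
    unfolding S_def Y_def Z_def using assms(1,3) by (subst sum.Sigma) (auto simp: case_prod_beta)
  then have rank_one: "fdim (Z ` S) + fdim (Y ` S) \<le> card S + 1"
    using dim_factors_of_rank_one_sum[OF finS] assms(6) by simp
  have card_S: "card S = (\<Sum>B\<in>P. fdim (y ` B))"
    unfolding S_def using assms(1,3) by simp
  have dim_y: "fdim (y ` \<Union>P) \<le> fdim (Y ` S)"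
  proof (rule fv.dim_le_dim_if_subset_span)
    show "y ` \<Union>P \<subseteq> fspan (Y ` S)"
    proof
      fix u
      assume "u \<in> y ` \<Union>P"
      then obtain B where "B \<in> P" "u \<in> y ` B"
        by blast
      then have "u \<in> fspan (y ` T B)"
        using assms(3) by blast
      moreover have "y ` T B \<subseteq> Y ` S"
        unfolding S_def Y_def using \<open>B \<in> P\<close> by (auto intro: image_eqI[of _ _ "(B, _)"])
      ultimately show "u \<in> fspan (Y ` S)"
        using fv.span_mono by blast
    qed
  qed (use finS in simp)
  have "z ` \<Union>P = (\<Union>B\<in>P. z ` B)"
    by blast
  then have dim_z: "fdim (z ` \<Union>P) + card P \<le> (\<Sum>B\<in>P. fdim (z ` B)) + fdim ((\<lambda>B. V B (r B)) ` P)"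
    using assms(2,4,5) by (simp add: fv.dim_UN_add_card_le assms(1))
  have dim_r: "fdim ((\<lambda>B. V B (r B)) ` P) \<le> fdim (Z ` S)"
  proof (rule fv.dim_subset_finite)
    show "(\<lambda>B. V B (r B)) ` P \<subseteq> Z ` S"
      unfolding S_def Z_def using assms(5) by force
  qed (use finS in simp)
  show ?thesis
    using rank_one card_S dim_y dim_z dim_r by (simp add: sum.distrib)
qed

lemma dim_factors_of_rank_one_blocks:
  fixes y :: "'a \<Rightarrow> 'i \<Rightarrow> 'f::field" and z :: "'a \<Rightarrow> (nat \<Rightarrow> 'i) \<Rightarrow> 'f"
  assumes "finite P" "\<And>B. B \<in> P \<Longrightarrow> finite B"
    and "\<And>B. B \<in> P \<Longrightarrow> w B \<in> fspan ((\<lambda>a. tensor_cons (y a) (z a)) ` B) \<and> w B \<noteq> 0"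
    and "(\<Sum>B\<in>P. w B) = tensor_cons y' z'"
  shows "fdim (y ` \<Union>P) + fdim (z ` \<Union>P) + card P \<le> (\<Sum>B\<in>P. fdim (y ` B) + fdim (z ` B)) + 1"
proof -
  have "\<forall>B\<in>P. \<exists>T. finite T \<and> y ` B \<subseteq> fspan (y ` T) \<and> card T = fdim (y ` B) \<and>
      (\<exists>V. w B = (\<Sum>s\<in>T. tensor_cons (y s) (V s)) \<and> (\<forall>s. V s \<in> fspan (z ` B)))"
  proof
    fix B
    assume B: "B \<in> P"
    obtain T where T: "T \<subseteq> B" "inj_on y T" "y ` B \<subseteq> fspan (y ` T)" "card T = fdim (y ` B)"
      by (rule fv.obtain_independent_index_set)
    moreover have "finite T"
      using T(1) assms(2)[OF B] finite_subset by blast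
    moreover obtain V where "w B = (\<Sum>s\<in>T. tensor_cons (y s) (V s))" "\<forall>s. V s \<in> fspan (z ` B)"
      using span_tensor_cons_expand[OF \<open>finite T\<close> T(2,3)] assms(3)[OF B] by blast
    ultimately show "\<exists>T. finite T \<and> y ` B \<subseteq> fspan (y ` T) \<and> card T = fdim (y ` B) \<and>
        (\<exists>V. w B = (\<Sum>s\<in>T. tensor_cons (y s) (V s)) \<and> (\<forall>s. V s \<in> fspan (z ` B)))"
      by blast
  qed
  from bchoice[OF this] obtain T where "\<forall>B\<in>P. finite (T B) \<and> y ` B \<subseteq> fspan (y ` T B) \<and>
      card (T B) = fdim (y ` B) \<and>
      (\<exists>V. w B = (\<Sum>s\<in>T B. tensor_cons (y s) (V s)) \<and> (\<forall>s. V s \<in> fspan (z ` B)))"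
    by blast
  then have T: "\<forall>B\<in>P. finite (T B) \<and> y ` B \<subseteq> fspan (y ` T B) \<and> card (T B) = fdim (y ` B)"
    and "\<forall>B\<in>P. \<exists>V. w B = (\<Sum>s\<in>T B. tensor_cons (y s) (V s)) \<and> (\<forall>s. V s \<in> fspan (z ` B))"
    by blast+
  from bchoice[OF this(2)] obtain V where
    V: "\<forall>B\<in>P. w B = (\<Sum>s\<in>T B. tensor_cons (y s) (V B s)) \<and> (\<forall>s. V B s \<in> fspan (z ` B))"
    by blast
  have "\<forall>B\<in>P. \<exists>s. s \<in> T B \<and> V B s \<noteq> 0"
  proof (rule ballI, rule ccontr)
    fix B
    assume B: "B \<in> P" and "\<not> (\<exists>s. s \<in> T B \<and> V B s \<noteq> 0)"
    then have "w B = 0"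
      using V by (auto simp: tensor_cons_eq_0_iff intro!: sum.neutral)
    then show False
      using assms(3)[OF B] by blast
  qed
  from bchoice[OF this] obtain r where "\<forall>B\<in>P. r B \<in> T B \<and> V B (r B) \<noteq> 0"
    by blast
  moreover have "(\<Sum>B\<in>P. \<Sum>s\<in>T B. tensor_cons (y s) (V B s)) = tensor_cons y' z'"
    using V assms(4) by simp
  ultimately show ?thesis
    using dim_factors_of_rank_one_double_sum[OF assms(1,2)] T V by blast
qed

lemma dim_factors_insert_eq:
  assumes "tensor_cons (y e) (z e) \<in> fspan ((\<lambda>a. tensor_cons (y a) (z a)) ` A)"
    and "tensor_cons (y e) (z e) \<noteq> 0"
  shows "fdim ((\<lambda>a. tensor_cons (y a) (z a)) ` insert e A) =
      fdim ((\<lambda>a. tensor_cons (y a) (z a)) ` A)"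
    and "fdim (y ` insert e A) = fdim (y ` A)" and "fdim (z ` insert e A) = fdim (z ` A)"
  using fv.dim_insert_if_in_span[OF assms(1)]
    fv.dim_insert_if_in_span[OF tensor_cons_in_span_left[OF assms(1)]]
    fv.dim_insert_if_in_span[OF tensor_cons_in_span_right[OF assms(1)]]
    assms(2)
  by (simp_all add: tensor_cons_eq_0_iff)

lemma dim_factors_le_of_blocks:
  fixes y :: "'a \<Rightarrow> 'i \<Rightarrow> 'f::field" and z :: "'a \<Rightarrow> (nat \<Rightarrow> 'i) \<Rightarrow> 'f"
  defines "x \<equiv> \<lambda>a. tensor_cons (y a) (z a)"
  assumes "finite A" "indecomposable_decomposition x A P"
    and "\<forall>B\<in>P. w B \<in> fspan (x ` B) \<and> w B \<noteq> 0" "(\<Sum>B\<in>P. w B) = tensor_cons y' z'"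
    and "\<And>B. B \<in> P \<Longrightarrow> fdim (y ` B) + fdim (z ` B) \<le> fdim (x ` B) + 1"
  shows "fdim (y ` A) + fdim (z ` A) \<le> fdim (x ` A) + 1"
proof -
  have part: "partition_on A P"
    using assms(3) unfolding indecomposable_decomposition_def by blast
  have fin: "finite P" "\<And>B. B \<in> P \<Longrightarrow> finite B"
    using finite_elements[OF assms(2) part] finite_subset[OF partition_on_subset[OF part] assms(2)]
    by blast+
  have "fdim (y ` A) + fdim (z ` A) + card P \<le> (\<Sum>B\<in>P. fdim (y ` B) + fdim (z ` B)) + 1"
    using dim_factors_of_rank_one_blocks[OF fin assms(4)[unfolded x_def, rule_format] assms(5)]
    unfolding partition_onD1[OF part, symmetric] .
  also have "(\<Sum>B\<in>P. fdim (y ` B) + fdim (z ` B)) \<le> (\<Sum>B\<in>P. fdim (x ` B) + 1)"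
    using assms(6) by (rule sum_mono)
  also have "\<dots> = (\<Sum>B\<in>P. fdim (x ` B)) + card P"
    by (simp only: sum.distrib) simp
  finally have "fdim (y ` A) + fdim (z ` A) \<le> (\<Sum>B\<in>P. fdim (x ` B)) + 1"
    by simp
  also have "\<dots> \<le> fdim (x ` A) + 1"
    using sum_dim_le_dim_if_indecomposable_decomposition[OF assms(2,3)] by simp
  finally show ?thesis .
qed

lemma dim_factors_le_dim_tensor_cons:
  fixes y :: "'a \<Rightarrow> 'i \<Rightarrow> 'f::field" and z :: "'a \<Rightarrow> (nat \<Rightarrow> 'i) \<Rightarrow> 'f"
  assumes "finite A" "A \<noteq> {}" "\<And>a. a \<in> A \<Longrightarrow> tensor_cons (y a) (z a) \<noteq> 0"
    and "indecomposable (\<lambda>a. tensor_cons (y a) (z a)) A"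
  shows "fdim (y ` A) + fdim (z ` A) \<le> fdim ((\<lambda>a. tensor_cons (y a) (z a)) ` A) + 1"
  using assms
proof (induction "card A" arbitrary: A rule: less_induct)
  case less
  define x where "x a = tensor_cons (y a) (z a)" for a
  obtain e where e: "e \<in> A"
    using less.prems(2) by blast
  show ?case
  proof (cases "A = {e}")
    case True
    then show ?thesis
      using less.prems(3)[OF e] by (simp add: fv.dim_singleton_nonzero tensor_cons_eq_0_iff)
  next
    case False
    define A' where "A' = A - {e}"
    have A: "A = insert e A'" "e \<notin> A'" "finite A'"
      unfolding A'_def using e less.prems(1) by auto
    have xe: "x e \<in> fspan (x ` A')"
      unfolding A'_def x_def by (rule indecomposable_in_span_Diff[OF less.prems(4) e False])
    have indec: "indecomposable x (insert e A')"
      using less.prems(4) A(1) unfolding x_def by simp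
    obtain P w where P: "indecomposable_decomposition x A' P" "finite P"
      and w: "\<forall>B\<in>P. w B \<in> fspan (x ` B) \<and> w B \<noteq> 0" "x e = (\<Sum>B\<in>P. w B)"
      by (rule obtain_components_of_removed_vector[OF A(3,2) indec xe])
    have part: "partition_on A' P" and indec_blocks: "\<forall>B\<in>P. indecomposable x B"
      using P(1) unfolding indecomposable_decomposition_def by blast+
    have IH: "fdim (y ` B) + fdim (z ` B) \<le> fdim (x ` B) + 1" if "B \<in> P" for B
    proof -
      have B: "B \<subseteq> A'" "finite B" "B \<noteq> {}"
        using partition_on_subset[OF part that] finite_subset[OF _ A(3)]
          partition_onD3[OF part] that
        by auto
      then have "card B < card A"
        using A less.prems(1) by (intro psubset_card_mono) auto
      moreover have "tensor_cons (y a) (z a) \<noteq> 0" if "a \<in> B" for a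
        using less.prems(3) B(1) that A(1) by blast
      ultimately show ?thesis
        using less.hyps[of B] B(2,3) indec_blocks that unfolding x_def by blast
    qed
    have "(\<Sum>B\<in>P. w B) = tensor_cons (y e) (z e)"
      using w(2) unfolding x_def by simp
    then have "fdim (y ` A') + fdim (z ` A') \<le> fdim (x ` A') + 1"
      using dim_factors_le_of_blocks[OF A(3) P(1)[unfolded x_def] w(1)[unfolded x_def]]
        IH[unfolded x_def] unfolding x_def by blast
    then show ?thesis
      using dim_factors_insert_eq[OF xe[unfolded x_def] less.prems(3)[OF e]] A(1)
      unfolding x_def by simp
  qed
qed

lemma sum_dim_factors_le_dim_tensor:
  fixes x :: "'a \<Rightarrow> nat \<Rightarrow> 'i \<Rightarrow> 'f::field"
  assumes "finite A" "A \<noteq> {}" "\<And>a. a \<in> A \<Longrightarrow> tensor m (x a) \<noteq> 0"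
    and "indecomposable (\<lambda>a. tensor m (x a)) A"
  shows "(\<Sum>j<m. fdim ((\<lambda>a. x a j) ` A)) + 1 \<le> fdim ((\<lambda>a. tensor m (x a)) ` A) + m"
  using assms(3,4)
proof (induction m arbitrary: x)
  case 0
  have "(\<lambda>a. tensor 0 (x a)) ` A = {\<lambda>_. 1}"
    using assms(2) by (auto simp: tensor_def)
  then show ?case
    by (simp add: fv.dim_singleton_nonzero fun_eq_iff)
next
  case (Suc m)
  define z where "z a = tensor m (\<lambda>j. x a (Suc j))" for a
  have split: "tensor (Suc m) (x a) = tensor_cons (x a 0) (z a)" for a
    unfolding z_def by (rule tensor_Suc)
  have nonzero: "tensor_cons (x a 0) (z a) \<noteq> 0" if "a \<in> A" for a
    using Suc.prems(1)[OF that] unfolding split .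
  have indec: "indecomposable (\<lambda>a. tensor_cons (x a 0) (z a)) A"
    using Suc.prems(2) unfolding split .
  have "fdim ((\<lambda>a. x a 0) ` A) + fdim (z ` A) \<le> fdim ((\<lambda>a. tensor (Suc m) (x a)) ` A) + 1"
    unfolding split by (rule dim_factors_le_dim_tensor_cons[OF assms(1,2) nonzero indec])
  moreover have "(\<Sum>j<m. fdim ((\<lambda>a. x a (Suc j)) ` A)) + 1 \<le> fdim (z ` A) + m"
  proof -
    have "tensor m (\<lambda>j. x a (Suc j)) \<noteq> 0" if "a \<in> A" for a
      using nonzero[OF that] unfolding z_def tensor_cons_eq_0_iff by blast
    then show ?thesis
      using Suc.IH[of "\<lambda>a j. x a (Suc j)"] indecomposable_tensor_cons_right[OF indec]
      unfolding z_def by blast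
  qed
  ultimately show ?case
    unfolding sum.lessThan_Suc_shift by linarith
qed

lemma tensor_factor_neq_0:
  assumes "tensor m z \<noteq> 0" "j < m"
  shows "z j \<noteq> 0"
proof
  assume "z j = 0"
  then have "tensor m z \<kappa> = 0" for \<kappa>
    unfolding tensor_def using assms(2) by (intro prod_zero bexI[of _ j]) auto
  then show False
    using assms(1) by (simp add: fun_eq_iff)
qed

lemma indecomposable_if_not_splits:
  assumes "\<not> splits n v"
  shows "indecomposable v {..<n}"
  unfolding indecomposable_def direct_summand_def
proof (intro allI impI notI)
  fix S
  assume S: "S \<subseteq> {..<n}" "S \<noteq> {}" "S \<noteq> {..<n}"
    and direct: "fspan (v ` S) \<inter> fspan (v ` ({..<n} - S)) = {0}"
  have "S \<subset> {..<n}"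
    using S(1,3) by blast
  then have card: "1 \<le> card S" "card S \<le> n - 1"
    using S(2) finite_subset[OF S(1)] psubset_card_mono[of "{..<n}" S]
    by (auto simp: Suc_le_eq card_gt_0_iff)
  have "v ` {..<n} = v ` S \<union> v ` ({..<n} - S)"
    using S(1) by blast
  then have "fspan (v ` {..<n}) =
      {u + w | u w. u \<in> fspan (v ` S) \<and> w \<in> fspan (v ` ({..<n} - S))}"
    by (simp add: fv.span_Un)
  then have "splits n v"
    unfolding splits_def using S(1) card direct by blast
  then show False
    using assms by contradiction
qed

theorem corollary5p1:
  fixes n m :: nat
    and x :: "nat \<Rightarrow> nat \<Rightarrow> ('i \<Rightarrow> 'f::field)"
    and d :: "nat \<Rightarrow> nat"
  assumes "n \<ge> 2" and "m \<ge> 2"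
    and "\<And>a. a < n \<Longrightarrow> tensor m (x a) \<noteq> 0"
    and "\<And>j. j < m \<Longrightarrow> d j = fdim ((\<lambda>a. x a j) ` {..<n})"
    and "n \<le> (\<Sum>j<m. d j - 1) + 1"
  shows "splits n (\<lambda>a. tensor m (x a))"
proof (rule ccontr)
  assume "\<not> splits n (\<lambda>a. tensor m (x a))"
  then have indec: "indecomposable (\<lambda>a. tensor m (x a)) {..<n}"
    by (rule indecomposable_if_not_splits)
  have d_pos: "1 \<le> d j" if "j < m" for j
    using fv.dim_singleton_nonzero[OF tensor_factor_neq_0[OF assms(3) that]]
      fv.dim_subset_finite[of "(\<lambda>a. x a j) ` {..<n}" "{x 0 j}"] assms(1) assms(4)[OF that]
    by simp
  have "(\<Sum>j<m. d j - 1) + m = (\<Sum>j<m. (d j - 1) + 1)"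
    by (simp only: sum.distrib) simp
  also have "\<dots> = (\<Sum>j<m. fdim ((\<lambda>a. x a j) ` {..<n}))"
    using d_pos assms(4) by (intro sum.cong) (simp_all add: Suc_le_eq)
  also have "\<dots> + 1 \<le> fdim ((\<lambda>a. tensor m (x a)) ` {..<n}) + m"
    using sum_dim_factors_le_dim_tensor[OF finite_lessThan _ _ indec] assms(1,3)
    by (simp add: lessThan_empty_iff)
  also have "\<dots> < n + m"
    using dim_lt_card_if_indecomposable[OF _ _ indec] assms(1) by simp
  finally show False
    using assms(5) by linarith
qed

end
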